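(* Let $a,b,v$ be integers with $b>a\ge2$ and $v\ge2$, let $u=2$, and set $X:=ab-a-b$. Then $a,b,u,v$ satisfy (1) $a$, $b$ and $2v-1$ are pairwise coprime; (2) $\frac{1}{a}+\frac{1}{b}+\frac{v}{2v-1}>1$; (3) $vab-1=(2v-1)X$, if and only if the triple $(a,b,2v-1)$ is one of $(3,14,5)$, $(3,10,7)$, $(3,8,11)$, $(3,7,19)$, $(4,11,3)$, $(4,5,9)$, $(5,7,3)$. *)

theory Defs
  imports Complex_Main
begin

end

theory Submission
  imports Defs
begin

text \<open>Condition (3) alone already pins down the triple: it is equivalent to
  \<open>(v - 2)(ab - 2a - 2b) + (a - 3)(b - 3) = 8\<close>.  For \<open>a \<ge> 4\<close> both summands are
  nonnegative, which bounds \<open>a \<le> 5\<close> and \<open>b \<le> 11\<close>; for \<open>a = 3\<close> the equation reads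
  \<open>(v - 2)(b - 6) = 8\<close>, so \<open>b - 6\<close> divides 8; \<open>a = 2\<close> makes the left-hand side
  nonpositive.  The remaining finitely many candidates are checked directly, and
  the seven solutions turn out to satisfy (1) and (2) as well.\<close>

lemma key_equation_iff:
  fixes a b v :: "'a::comm_ring_1"
  shows "v*a*b - 1 = (2*v - 1) * (a*b - a - b) \<longleftrightarrow>
         (v - 2) * (a*b - 2*a - 2*b) + (a - 3) * (b - 3) = 8"
proof -
  have "(2*v - 1) * (a*b - a - b) - (v*a*b - 1) =
        (v - 2) * (a*b - 2*a - 2*b) + (a - 3) * (b - 3) - 8"
    by (simp add: algebra_simps)
  then show ?thesis
    by (metis eq_iff_diff_eq_0)
qed

lemma key_equation_bounds:
  fixes a b v :: int
  assumes "2 \<le> a" "a < b" "2 \<le> v"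
    and key: "(v - 2) * (a*b - 2*a - 2*b) + (a - 3) * (b - 3) = 8"
  shows "3 \<le> a \<and> a \<le> 5 \<and> b \<le> 14"
proof -
  have "a \<noteq> 2"
  proof
    assume "a = 2"
    with key have "(v - 2) * 4 + (b - 3) = -8"
      by (simp add: algebra_simps)
    with assms show False by simp
  qed
  then have "3 \<le> a" using assms(1) by simp
  show ?thesis
  proof (cases "a = 3")
    case True
    with key have prod: "(v - 2) * (b - 6) = 8"
      by (simp add: algebra_simps)
    with assms(3) have "b - 6 > 0"
      using zero_less_mult_iff [of "v - 2" "b - 6"] by auto
    moreover from prod have "b - 6 dvd 8"
      by (metis dvd_triv_right)
    ultimately have "b - 6 \<le> 8"
      by (simp add: zdvd_imp_le)
    with True show ?thesis by simp
  next
    case False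
    with \<open>3 \<le> a\<close> have "4 \<le> a" by simp
    have "(a - 2) * (b - 2) \<ge> 2 * 3"
      using \<open>4 \<le> a\<close> assms(2) by (intro mult_mono) auto
    then have "(v - 2) * (a*b - 2*a - 2*b) \<ge> 0"
      using assms(3) by (intro mult_nonneg_nonneg) (auto simp: algebra_simps)
    with key have small: "(a - 3) * (b - 3) \<le> 8" by simp
    have "a \<le> 5"
    proof (rule ccontr)
      assume "\<not> a \<le> 5"
      then have "(a - 3) * (b - 3) \<ge> 3 * 4"
        using assms(2) by (intro mult_mono) auto
      with small show False by simp
    qed
    moreover have "b \<le> 11"
    proof -
      have "1 * (b - 3) \<le> (a - 3) * (b - 3)"
        using \<open>4 \<le> a\<close> assms(2) by (intro mult_right_mono) auto
      with small show ?thesis by simp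
    qed
    ultimately show ?thesis using \<open>3 \<le> a\<close> by simp
  qed
qed

lemma key_equation_solutions:
  fixes a b v :: int
  assumes "2 \<le> a" "a < b" "2 \<le> v"
    and key: "(v - 2) * (a*b - 2*a - 2*b) + (a - 3) * (b - 3) = 8"
  shows "(a, b, v) \<in> {(3,14,3), (3,10,4), (3,8,6), (3,7,10), (4,11,2), (4,5,5), (5,7,2)}"
proof -
  from key_equation_bounds [OF assms] assms(2)
  have "3 \<le> a" "a \<le> 5" "4 \<le> b" "b \<le> 14" by auto
  then have "a \<in> {3,4,5}" "b \<in> {4,5,6,7,8,9,10,11,12,13,14}"
    by (simp_all add: insert_iff, presburger, presburger)
  with key assms(2,3) show ?thesis
    by (elim insertE emptyE) (simp_all, presburger+)
qed

theorem lemma3p6: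
  fixes a b v :: int
  assumes "2 \<le> a" "a < b" "2 \<le> v"
  shows "(coprime a b \<and> coprime a (2*v - 1) \<and> coprime b (2*v - 1) \<and>
          1 / real_of_int a + 1 / real_of_int b + real_of_int v / real_of_int (2*v - 1) > 1 \<and>
          v*a*b - 1 = (2*v - 1) * (a*b - a - b))
     \<longleftrightarrow> (a, b, 2*v - 1) \<in> {(3,14,5), (3,10,7), (3,8,11), (3,7,19), (4,11,3), (4,5,9), (5,7,3)}"
    (is "?conditions \<longleftrightarrow> ?listed")
proof
  assume ?conditions
  then have "(v - 2) * (a*b - 2*a - 2*b) + (a - 3) * (b - 3) = 8"
    by (simp add: key_equation_iff)
  from key_equation_solutions [OF assms this] show ?listed by auto
next
  assume ?listed
  then have "(a, b, v) \<in> {(3,14,3), (3,10,4), (3,8,6), (3,7,10), (4,11,2), (4,5,5), (5,7,2)}"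
    by auto
  then show ?conditions
    by (elim insertE emptyE; simp add: coprime_iff_gcd_eq_1 gcd_non_0_int)
qed

end
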